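(* Let $N\ge 1$ and let $\boldsymbol{R}\in\mathbb{C}^{N\times N}$ be Hermitian and positive semi-definite, with eigenvalues $\lambda_1\le\cdots\le\lambda_N$, where $\lambda_N>0$. Let $\boldsymbol{e}_N$ be a unit-norm eigenvector of $\boldsymbol{R}$ for the eigenvalue $\lambda_N$, and let $\boldsymbol{d}\in\Omega^N$ be defined by $\boldsymbol{d}(i)=e^{j\arg(\boldsymbol{e}_N(i))}$ if $\boldsymbol{e}_N(i)\neq 0$ and $\boldsymbol{d}(i)=e^{j0}=1$ if $\boldsymbol{e}_N(i)=0$. Let $V_{\mathcal{D}}=\boldsymbol{d}^H\boldsymbol{R}\boldsymbol{d}$ and $V_{opt}=\max_{\boldsymbol{s}\in\Omega^N}\boldsymbol{s}^H\boldsymbol{R}\boldsymbol{s}$. Then \[ \frac{V_{\mathcal{D}}}{V_{opt}}\ \ge\ \frac{\lambda_N+(N-1)\lambda_1}{\lambda_N N}. \]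
   Context: $\Omega=\{x\in\mathbb{C}: |x|=1\}$ is the complex unit circle and $j$ is the imaginary unit. $\arg(x)$ denotes the argument of a complex number $x$, and $\boldsymbol{e}_N(i)$ is the $i$th entry of $\boldsymbol{e}_N$. The vector $\boldsymbol{d}$ is the output of the "dominant-eigenvector-matching" heuristic for the unimodular quadratic program $\max_{\boldsymbol{s}\in\Omega^N}\boldsymbol{s}^H\boldsymbol{R}\boldsymbol{s}$. *)

theory Defs
  imports "HOL-Analysis.Analysis"
begin

text \<open>Quadratic form s^H R s for complex N x N matrices, indexed by a finite type 'n (N = CARD('n)).\<close>
definition quadform :: "complex^'n^'n \<Rightarrow> complex^'n \<Rightarrow> complex" where
  "quadform R s = (\<Sum>i\<in>UNIV. cnj (s$i) * (R *v s)$i)"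

definition hermitian :: "complex^'n^'n \<Rightarrow> bool" where
  "hermitian R \<longleftrightarrow> (\<forall>i j. R$i$j = cnj (R$j$i))"

definition psd :: "complex^'n^'n \<Rightarrow> bool" where
  "psd R \<longleftrightarrow> (\<forall>x. quadform R x \<in> \<real> \<and> 0 \<le> Re (quadform R x))"

definition is_eigenvalue :: "complex^'n^'n \<Rightarrow> complex \<Rightarrow> bool" where
  "is_eigenvalue R \<mu> \<longleftrightarrow> (\<exists>v. v \<noteq> 0 \<and> R *v v = \<mu> *s v)"

definition unimodular :: "(complex^'n) set" where
  "unimodular = {s. \<forall>i. norm (s$i) = 1}"

definition dem_vec :: "complex^'n \<Rightarrow> complex^'n" where
  "dem_vec e = (\<chi> i. if e$i \<noteq> 0 then exp (\<i> * complex_of_real (Arg (e$i))) else exp (\<i> * 0))"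

end

theory Submission
  imports Defs
begin

text \<open>
  Write \<open>\<sigma> = \<langle>e, d\<rangle> = \<Sum>i |e(i)|\<close>; since \<open>e\<close> is a unit vector, \<open>\<sigma> \<ge> \<parallel>e\<parallel> = 1\<close>.
  Splitting \<open>d = \<sigma> e + w\<close> with \<open>w \<perp> e\<close>, the eigenvector property kills the cross terms, so
  \<open>d\<^sup>H R d = \<sigma>\<^sup>2 \<lambda>\<^sub>N + w\<^sup>H R w \<ge> \<sigma>\<^sup>2 \<lambda>\<^sub>N + \<lambda>\<^sub>1 (N - \<sigma>\<^sup>2) \<ge> \<lambda>\<^sub>N + (N - 1) \<lambda>\<^sub>1\<close>, using
  \<open>\<parallel>d\<parallel>\<^sup>2 = N\<close> and \<open>\<lambda>\<^sub>1 \<le> \<lambda>\<^sub>N\<close>. On the other hand every \<open>s \<in> \<Omega>\<^sup>N\<close> has \<open>\<parallel>s\<parallel>\<^sup>2 = N\<close>, so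
  \<open>V\<^sub>o\<^sub>p\<^sub>t \<le> N \<lambda>\<^sub>N\<close>. The Rayleigh bounds \<open>\<lambda>\<^sub>1 \<parallel>z\<parallel>\<^sup>2 \<le> z\<^sup>H R z \<le> \<lambda>\<^sub>N \<parallel>z\<parallel>\<^sup>2\<close> are obtained variationally:
  a maximiser of the quadratic form on the unit sphere is an eigenvector.
\<close>

definition cinner :: "complex^'n \<Rightarrow> complex^'n \<Rightarrow> complex" where
  "cinner x y = (\<Sum>i\<in>UNIV. cnj (x$i) * y$i)"

lemma quadform_eq_cinner: "quadform R s = cinner s (R *v s)"
  by (simp add: quadform_def cinner_def)

lemma cinner_add_left: "cinner (x + y) z = cinner x z + cinner y z"
  by (simp add: cinner_def algebra_simps sum.distrib)

lemma cinner_add_right: "cinner z (x + y) = cinner z x + cinner z y"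
  by (simp add: cinner_def algebra_simps sum.distrib)

lemma cinner_diff_right: "cinner z (x - y) = cinner z x - cinner z y"
  by (simp add: cinner_def algebra_simps sum_subtractf)

lemma cinner_minus_right: "cinner z (- x) = - cinner z x"
  by (simp add: cinner_def sum_negf)

lemma cinner_scale_left: "cinner (c *s x) z = cnj c * cinner x z"
  by (simp add: cinner_def algebra_simps sum_distrib_left)

lemma cinner_scale_right: "cinner z (c *s x) = c * cinner z x"
  by (simp add: cinner_def algebra_simps sum_distrib_left)

lemma cnj_cinner: "cnj (cinner x y) = cinner y x"
  by (simp add: cinner_def mult.commute)

lemma Re_cinner_commute: "Re (cinner x y) = Re (cinner y x)"
  by (metis cnj_cinner cnj.simps(1))

lemma cinner_self_eq_norm_power2: "cinner z z = of_real (norm z ^ 2)"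
proof -
  have "cinner z z = (\<Sum>i\<in>UNIV. of_real (norm (z$i) ^ 2))"
    unfolding cinner_def
    by (intro sum.cong refl) (metis complex_norm_square mult.commute of_real_power)
  also have "\<dots> = of_real (\<Sum>i\<in>UNIV. norm (z$i) ^ 2)"
    by simp
  also have "(\<Sum>i\<in>UNIV. norm (z$i) ^ 2) = norm z ^ 2"
    by (simp add: norm_vec_def L2_set_def sum_nonneg)
  finally show ?thesis .
qed

lemma matrix_vector_mult_scale: "R *v (c *s x) = c *s (R *v (x :: complex^'n))"
  by (simp add: vec_eq_iff matrix_vector_mult_def sum_distrib_left algebra_simps)

lemma matrix_vector_mult_uminus: "(- R) *v x = - (R *v (x :: complex^'n))"
  by (simp add: vec_eq_iff matrix_vector_mult_def sum_negf)

lemma of_real_scale_eq_scaleR: "complex_of_real r *s (x :: complex^'n) = r *\<^sub>R x"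
  by (simp add: vec_eq_iff) (simp add: scaleR_conv_of_real)

lemma hermitian_cinner_adjoint:
  assumes "hermitian R"
  shows "cinner x (R *v y) = cinner (R *v x) y"
proof -
  have R: "cnj (R$j$i) = R$i$j" for i j
    using assms unfolding hermitian_def by metis
  have "cinner x (R *v y) = (\<Sum>i\<in>UNIV. \<Sum>j\<in>UNIV. cnj (x$i) * R$i$j * y$j)"
    by (simp add: cinner_def matrix_vector_mult_def sum_distrib_left mult.assoc)
  also have "\<dots> = (\<Sum>j\<in>UNIV. \<Sum>i\<in>UNIV. cnj (x$i) * R$i$j * y$j)"
    by (rule sum.swap)
  also have "\<dots> = cinner (R *v x) y"
    unfolding cinner_def matrix_vector_mult_def
    by (simp only: vec_lambda_beta cnj_sum sum_distrib_right complex_cnj_mult)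
      (intro sum.cong refl, simp add: R mult.commute mult.left_commute)
  finally show ?thesis .
qed

lemma hermitian_uminus: "hermitian R \<Longrightarrow> hermitian (- R)"
  unfolding hermitian_def by (metis complex_cnj_minus vector_uminus_component)

lemma is_eigenvalue_uminus: "is_eigenvalue (- R) \<mu> \<Longrightarrow> is_eigenvalue R (- \<mu>)"
  unfolding is_eigenvalue_def
  by (metis matrix_vector_mult_uminus minus_minus vector_sneg_minus1 vector_smult_assoc mult_minus1)

lemma quadform_add:
  "quadform R (x + y) = quadform R x + cinner x (R *v y) + cinner y (R *v x) + quadform R y"
  by (simp add: quadform_eq_cinner matrix_vector_right_distrib cinner_add_left cinner_add_right)

lemma quadform_scale: "quadform R (c *s x) = cnj c * c * quadform R x"
  by (simp add: quadform_eq_cinner matrix_vector_mult_scale cinner_scale_left cinner_scale_right)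

lemma quadform_uminus_matrix: "quadform (- R) z = - quadform R z"
  by (simp add: quadform_eq_cinner matrix_vector_mult_uminus cinner_minus_right)

lemma continuous_on_Re_quadform: "continuous_on UNIV (\<lambda>z. Re (quadform R z))"
  unfolding quadform_def matrix_vector_mult_def by (intro continuous_intros)

lemma Re_quadform_attains_max_on_sphere:
  fixes R :: "complex^'n^'n"
  obtains x where "norm x = 1" and "\<And>z. Re (quadform R z) \<le> Re (quadform R x) * norm z ^ 2"
proof -
  define f where "f z = Re (quadform R z)" for z
  have "sphere (0::complex^'n) 1 \<noteq> {}"
    by simp
  then obtain x where x: "x \<in> sphere 0 1" and max: "\<forall>y\<in>sphere 0 1. f y \<le> f x"
    using continuous_attains_sup[OF compact_sphere _ continuous_on_subset[OF continuous_on_Re_quadform]]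
    unfolding f_def by blast
  have "f z \<le> f x * norm z ^ 2" for z
  proof (cases "z = 0")
    case True
    then show ?thesis by (simp add: f_def quadform_def)
  next
    case False
    define w where "w = (1 / norm z) *\<^sub>R z"
    have "z = complex_of_real (norm z) *s w"
      using False by (simp add: of_real_scale_eq_scaleR w_def)
    then have "quadform R z = complex_of_real (norm z ^ 2) * quadform R w"
      by (metis quadform_scale complex_cnj_complex_of_real of_real_mult power2_eq_square)
    then have "f z = norm z ^ 2 * f w"
      by (simp add: f_def)
    moreover have "f w \<le> f x"
      using max False by (simp add: w_def)
    ultimately show ?thesis
      by (metis mult.commute mult_right_mono zero_le_power2)
  qed
  with x show ?thesis using that by (simp add: f_def)
qed

lemma quadratic_pos_at_damped_step:
  fixes a b :: real
  assumes "a \<le> 0" and "b \<noteq> 0"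
  shows "0 < 2 * (b / (1 - a)) * b + (b / (1 - a))\<^sup>2 * a"
proof -
  have "(1 - a)\<^sup>2 * (2 * (b / (1 - a)) * b + (b / (1 - a))\<^sup>2 * a) = b\<^sup>2 * (2 - a)"
    using assms(1) by (simp add: divide_simps power2_eq_square) (simp add: algebra_simps)
  moreover have "0 < b\<^sup>2 * (2 - a)"
    using assms by simp
  ultimately show ?thesis
    by (metis zero_less_mult_iff zero_le_power2 not_less)
qed

text \<open>A first-order optimality condition: perturbing \<open>x\<close> in the direction of the residual
  \<open>u = R x - M x\<close> with step \<open>t = \<parallel>u\<parallel>\<^sup>2 / (1 - a)\<close>, where \<open>a = u\<^sup>H R u - M \<parallel>u\<parallel>\<^sup>2 \<le> 0\<close>,
  would beat the bound \<open>M\<close> unless \<open>u = 0\<close>.\<close>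

lemma hermitian_Rayleigh_maximiser_is_eigenvector:
  fixes R :: "complex^'n^'n"
  assumes herm: "hermitian R"
    and bound: "\<And>z. Re (quadform R z) \<le> M * norm z ^ 2"
    and attained: "Re (quadform R x) = M * norm x ^ 2"
  shows "R *v x = complex_of_real M *s x"
proof -
  define u where "u = R *v x - complex_of_real M *s x"
  define a where "a = Re (quadform R u) - M * norm u ^ 2"
  define t where "t = norm u ^ 2 / (1 - a)"
  define y where "y = x + complex_of_real t *s u"
  have a: "a \<le> 0"
    using bound[of u] by (simp add: a_def)
  have residual: "Re (cinner u (R *v x)) - M * Re (cinner u x) = norm u ^ 2"
    using arg_cong[of _ _ Re, OF cinner_self_eq_norm_power2[of u]]
    by (simp add: u_def cinner_diff_right cinner_scale_right)
  have "Re (quadform R y) = Re (quadform R x) + 2 * t * Re (cinner u (R *v x)) + t\<^sup>2 * Re (quadform R u)"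
    using Re_cinner_commute[of "R *v u" x] hermitian_cinner_adjoint[OF herm, of u x]
    by (simp add: y_def quadform_add quadform_scale matrix_vector_mult_scale
        cinner_scale_left cinner_scale_right power2_eq_square)
  moreover have "Re (cinner y y) = Re (cinner x x) + 2 * t * Re (cinner u x) + t\<^sup>2 * Re (cinner u u)"
    using Re_cinner_commute[of x u]
    by (simp add: y_def cinner_add_left cinner_add_right cinner_scale_left cinner_scale_right
        power2_eq_square algebra_simps)
  then have "norm y ^ 2 = norm x ^ 2 + 2 * t * Re (cinner u x) + t\<^sup>2 * norm u ^ 2"
    by (simp add: cinner_self_eq_norm_power2)
  ultimately have "2 * t * norm u ^ 2 + t\<^sup>2 * a \<le> 0"
    using bound[of y] attained residual by (simp add: a_def algebra_simps)
  then have "norm u ^ 2 = 0"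
    using quadratic_pos_at_damped_step[OF a, of "norm u ^ 2"] unfolding t_def by linarith
  then show ?thesis
    by (simp add: u_def)
qed

lemma hermitian_top_eigenvalue:
  fixes R :: "complex^'n^'n"
  assumes "hermitian R"
  obtains M where "is_eigenvalue R (complex_of_real M)" and "\<And>z. Re (quadform R z) \<le> M * norm z ^ 2"
proof -
  obtain x where x: "norm x = 1" and max: "\<And>z. Re (quadform R z) \<le> Re (quadform R x) * norm z ^ 2"
    using Re_quadform_attains_max_on_sphere[of R] by blast
  have "R *v x = complex_of_real (Re (quadform R x)) *s x"
    by (rule hermitian_Rayleigh_maximiser_is_eigenvector[OF assms max]) (simp add: x)
  moreover have "x \<noteq> 0"
    using x by auto
  ultimately show ?thesis
    using that max unfolding is_eigenvalue_def by blast
qed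

lemma Re_quadform_le_eigenvalue_bound:
  fixes R :: "complex^'n^'n"
  assumes "hermitian R" and "\<And>\<mu>. is_eigenvalue R \<mu> \<Longrightarrow> Re \<mu> \<le> l"
  shows "Re (quadform R z) \<le> l * norm z ^ 2"
proof -
  obtain M where "is_eigenvalue R (complex_of_real M)" and "Re (quadform R z) \<le> M * norm z ^ 2"
    using hermitian_top_eigenvalue[OF assms(1)] by metis
  with assms(2) show ?thesis
    by (metis Re_complex_of_real mult_right_mono order_trans zero_le_power2)
qed

lemma Re_quadform_ge_eigenvalue_bound:
  fixes R :: "complex^'n^'n"
  assumes "hermitian R" and "\<And>\<mu>. is_eigenvalue R \<mu> \<Longrightarrow> l \<le> Re \<mu>"
  shows "l * norm z ^ 2 \<le> Re (quadform R z)"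
proof -
  have "Re \<mu> \<le> - l" if "is_eigenvalue (- R) \<mu>" for \<mu>
    using assms(2)[OF is_eigenvalue_uminus[OF that]] by simp
  from Re_quadform_le_eigenvalue_bound[OF hermitian_uminus[OF assms(1)] this, of z]
  show ?thesis
    by (simp add: quadform_uminus_matrix)
qed

lemma psd_eigenvalue_nonneg:
  assumes "psd R" and "is_eigenvalue R (complex_of_real l)"
  shows "0 \<le> l"
proof -
  obtain v where v: "v \<noteq> 0" and "R *v v = complex_of_real l *s v"
    using assms(2) unfolding is_eigenvalue_def by blast
  then have "Re (quadform R v) = l * norm v ^ 2"
    by (simp add: quadform_eq_cinner cinner_scale_right cinner_self_eq_norm_power2)
  then have "0 \<le> l * norm v ^ 2"
    using assms(1) unfolding psd_def by metis
  with v show ?thesis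
    by (simp add: zero_le_mult_iff)
qed

lemma quadform_split_along_eigenvector:
  fixes R :: "complex^'n^'n" and d :: "complex^'n"
  assumes herm: "hermitian R" and eig: "R *v e = complex_of_real l *s e" and unit: "norm e = 1"
  defines "w \<equiv> d - cinner e d *s e"
  shows "quadform R d = complex_of_real (norm (cinner e d) ^ 2 * l) + quadform R w"
    and "norm d ^ 2 = norm (cinner e d) ^ 2 + norm w ^ 2"
proof -
  define c where "c = cinner e d"
  have ee: "cinner e e = 1"
    using unit by (simp add: cinner_self_eq_norm_power2)
  have ew: "cinner e w = 0" and we: "cinner w e = 0"
    using cnj_cinner[of e w] by (simp_all add: w_def c_def cinner_diff_right cinner_scale_right ee)
  have d: "d = c *s e + w"
    by (simp add: w_def c_def)
  have cc: "cnj c * c = complex_of_real (norm c ^ 2)"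
    by (metis complex_norm_square mult.commute)
  have "cinner (c *s e) (R *v w) = 0"
    by (simp add: hermitian_cinner_adjoint[OF herm] matrix_vector_mult_scale eig cinner_scale_left ew)
  moreover have "cinner w (R *v (c *s e)) = 0"
    by (simp add: matrix_vector_mult_scale eig cinner_scale_right we)
  moreover have "quadform R e = complex_of_real l"
    by (simp add: quadform_eq_cinner eig cinner_scale_right ee)
  ultimately have "quadform R d = cnj c * c * complex_of_real l + quadform R w"
    by (subst d) (simp add: quadform_add quadform_scale)
  then show "quadform R d = complex_of_real (norm c ^ 2 * l) + quadform R w"
    by (simp add: cc)
  have "cinner d d = cnj c * c + cinner w w"
    unfolding d by (simp add: cinner_add_left cinner_add_right cinner_scale_left cinner_scale_right ee ew we)
  then have "complex_of_real (norm d ^ 2) = complex_of_real (norm c ^ 2 + norm w ^ 2)"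
    by (simp only: cc cinner_self_eq_norm_power2 of_real_add)
  then show "norm d ^ 2 = norm c ^ 2 + norm w ^ 2"
    by (simp only: of_real_eq_iff)
qed

lemma norm_unimodular:
  fixes s :: "complex^'n"
  assumes "s \<in> unimodular"
  shows "norm s ^ 2 = real CARD('n)"
  using assms by (simp add: unimodular_def norm_vec_def L2_set_def)

lemma dem_vec_unimodular: "dem_vec e \<in> unimodular"
  by (simp add: unimodular_def dem_vec_def)

lemma cnj_mult_exp_Arg:
  assumes "z \<noteq> 0"
  shows "cnj z * exp (\<i> * complex_of_real (Arg z)) = of_real (norm z)"
proof -
  have "exp (\<i> * complex_of_real (Arg z)) = z / of_real (norm z)"
    using assms by (simp add: cis_conv_exp[symmetric] cis_Arg sgn_eq)
  then have "cnj z * exp (\<i> * complex_of_real (Arg z)) = (z * cnj z) / of_real (norm z)"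
    by simp
  also have "\<dots> = of_real (norm z ^ 2) / of_real (norm z)"
    by (metis complex_norm_square)
  also have "\<dots> = of_real (norm z)"
    using assms by (simp add: power2_eq_square)
  finally show ?thesis .
qed

lemma cinner_dem_vec: "cinner e (dem_vec e) = complex_of_real (\<Sum>i\<in>UNIV. norm (e$i))"
  unfolding cinner_def of_real_sum
  by (intro sum.cong refl) (simp add: dem_vec_def cnj_mult_exp_Arg)

lemma norm_le_sum_norm_components: "norm (x :: 'a::real_normed_vector^'n) \<le> (\<Sum>i\<in>UNIV. norm (x$i))"
  unfolding norm_vec_def by (rule L2_set_le_sum) simp

lemma Re_quadform_dem_vec_ge:
  fixes R :: "complex^'n^'n"
  assumes herm: "hermitian R"
    and lower: "\<And>\<mu>. is_eigenvalue R \<mu> \<Longrightarrow> lmin \<le> Re \<mu>" and "lmin \<le> lmax"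
    and unit: "norm e = 1" and eig: "R *v e = complex_of_real lmax *s e"
  shows "lmax + (real CARD('n) - 1) * lmin \<le> Re (quadform R (dem_vec e))"
proof -
  define d where "d = dem_vec e"
  define \<sigma> where "\<sigma> = (\<Sum>i\<in>UNIV. norm (e$i))"
  define w where "w = d - cinner e d *s e"
  have "norm (cinner e d) = \<sigma>"
    unfolding d_def cinner_dem_vec norm_of_real \<sigma>_def by (simp add: sum_nonneg)
  then have split: "Re (quadform R d) = \<sigma>\<^sup>2 * lmax + Re (quadform R w)"
    "real CARD('n) = \<sigma>\<^sup>2 + norm w ^ 2"
    using quadform_split_along_eigenvector[OF herm eig unit, where d = d]
      norm_unimodular[OF dem_vec_unimodular[of e]] by (simp_all add: w_def d_def)
  have "1 \<le> \<sigma>\<^sup>2"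
    using norm_le_sum_norm_components[of e] unit by (simp add: \<sigma>_def)
  then have "1 * (lmax - lmin) \<le> \<sigma>\<^sup>2 * (lmax - lmin)"
    using \<open>lmin \<le> lmax\<close> by (intro mult_right_mono) simp_all
  then have "lmax + (real CARD('n) - 1) * lmin \<le> \<sigma>\<^sup>2 * lmax + lmin * norm w ^ 2"
    using split(2) by (simp add: algebra_simps)
  also have "\<dots> \<le> Re (quadform R d)"
    using Re_quadform_ge_eigenvalue_bound[OF herm lower, of w] split(1) by simp
  finally show ?thesis
    by (simp add: d_def)
qed

lemma Re_quadform_unimodular_le:
  fixes R :: "complex^'n^'n"
  assumes "hermitian R" and "\<And>\<mu>. is_eigenvalue R \<mu> \<Longrightarrow> Re \<mu> \<le> lmax" and "s \<in> unimodular"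
  shows "Re (quadform R s) \<le> lmax * real CARD('n)"
  using Re_quadform_le_eigenvalue_bound[OF assms(1,2), of s] norm_unimodular[OF assms(3)] by simp

theorem proposition1:
  fixes R :: "complex^'n^'n" and e :: "complex^'n" and lmin lmax :: real
  assumes herm: "hermitian R" and psd: "psd R"
    and lmin_eig: "is_eigenvalue R (complex_of_real lmin)"
    and lmax_eig: "is_eigenvalue R (complex_of_real lmax)"
    and bounds: "\<And>\<mu>. is_eigenvalue R \<mu> \<Longrightarrow> lmin \<le> Re \<mu> \<and> Re \<mu> \<le> lmax"
    and lmax_pos: "lmax > 0"
    and e_norm: "norm e = 1"
    and e_eig: "R *v e = complex_of_real lmax *s e"
  shows "Re (quadform R (dem_vec e)) / (SUP s\<in>unimodular. Re (quadform R s))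
           \<ge> (lmax + (real CARD('n) - 1) * lmin) / (lmax * real CARD('n))"
proof -
  define N where "N = real CARD('n)"
  define V\<^sub>D where "V\<^sub>D = Re (quadform R (dem_vec e))"
  define V\<^sub>o\<^sub>p\<^sub>t where "V\<^sub>o\<^sub>p\<^sub>t = (SUP s\<in>unimodular. Re (quadform R s))"
  have N: "N \<ge> 1"
    by (simp add: N_def Suc_le_eq)
  have lmin: "0 \<le> lmin" "lmin \<le> lmax"
    using psd_eigenvalue_nonneg[OF psd lmin_eig] bounds[OF lmin_eig] by simp_all
  have VD: "lmax + (N - 1) * lmin \<le> V\<^sub>D"
    using Re_quadform_dem_vec_ge[OF herm _ lmin(2) e_norm e_eig] bounds by (simp add: N_def V\<^sub>D_def)
  have opt_le: "Re (quadform R s) \<le> lmax * N" if "s \<in> unimodular" for s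
    using Re_quadform_unimodular_le[OF herm _ that] bounds by (simp add: N_def)
  have "V\<^sub>D \<le> V\<^sub>o\<^sub>p\<^sub>t" and "V\<^sub>o\<^sub>p\<^sub>t \<le> lmax * N"
    unfolding V\<^sub>D_def V\<^sub>o\<^sub>p\<^sub>t_def using dem_vec_unimodular opt_le
    by (auto intro!: cSUP_upper cSUP_least bdd_aboveI2)
  moreover have "0 < V\<^sub>D"
    using VD lmin N lmax_pos by (smt (verit) mult_nonneg_nonneg)
  ultimately have "(lmax + (N - 1) * lmin) / (lmax * N) \<le> V\<^sub>D / (lmax * N)"
    and "V\<^sub>D / (lmax * N) \<le> V\<^sub>D / V\<^sub>o\<^sub>p\<^sub>t"
    using VD lmax_pos N by (simp_all add: divide_right_mono divide_left_mono)
  then show ?thesis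
    by (simp add: N_def V\<^sub>D_def V\<^sub>o\<^sub>p\<^sub>t_def)
qed

end
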